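(* Let $k\geq 8$ and $2k+1\leq n\leq 4k$ be integers, and let $h(n,k)=\binom{n-1}{k-1}-\binom{n-k-1}{k-1}+1$. Then \[ \binom{n-2}{k-2}+\binom{n-4}{k-2}+\frac{h(n,k)^2}{\binom{n-2}{k-2}+\binom{n-4}{k-2}}>2\binom{n-1}{k-1}. \] *)

theory Defs
  imports Complex_Main
begin

definition h :: "nat \<Rightarrow> nat \<Rightarrow> real" where
  "h n k = real ((n - 1) choose (k - 1)) - real ((n - k - 1) choose (k - 1)) + 1"

end

theory Submission
  imports Defs
begin

(* With B = C(n-1,k-1), A = C(n-2,k-2) + C(n-4,k-2) and D = C(n-k-1,k-1) we have
   h n k = B - D + 1, and A^2 + h^2 - 2AB >= (B - A)^2 - 2BD, so it suffices that
   2BD < (B - A)^2.  Put u = k/(n-1), which lies in [1/4, 1/2].  Ratios of binomial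
   coefficients give A <= B u (1 + (16/15 (1 - 7u/8))^2) and D <= B (1 - u)^(k-1) <= B (1 - u)^7,
   which reduces the claim to a polynomial inequality in u; both sides are monotone in u,
   so it is checked at the endpoints of four subintervals of [1/4, 1/2]. *)

lemma binomial_absorb_comp2:
  "(m - j) * (m - 1 - j) * (m choose j) = m * (m - 1) * ((m - 2) choose j)"
  using binomial_absorb_comp[of m j] binomial_absorb_comp[of "m - 1" j]
  by (metis diff_diff_left mult.assoc mult.left_commute one_add_one)

lemma binomial_mult_power_le:
  fixes a b m :: nat
  assumes "a \<le> b"
  shows "real (a choose m) * real b ^ m \<le> real (b choose m) * real a ^ m"
proof (induction m)
  case 0
  then show ?case by simp
next
  case (Suc m)
  have step: "real (Suc m) * real (c choose Suc m) = real (c - m) * real (c choose m)" for c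
    using binomial_absorption[of m c] binomial_absorb_comp[of c m]
    by (metis of_nat_mult)
  have factor: "real (a - m) * real b \<le> real (b - m) * real a"
    using assms by (cases "m \<le> a") (auto simp: of_nat_diff algebra_simps intro: mult_right_mono)
  have "real (Suc m) * (real (a choose Suc m) * real b ^ Suc m)
      = (real (a - m) * real b) * (real (a choose m) * real b ^ m)"
    using step[of a] by (simp add: ac_simps del: of_nat_Suc)
  also have "\<dots> \<le> (real (b - m) * real a) * (real (b choose m) * real a ^ m)"
    by (rule mult_mono[OF factor Suc.IH]) auto
  also have "\<dots> = real (Suc m) * (real (b choose Suc m) * real a ^ Suc m)"
    using step[of b] by (simp add: ac_simps del: of_nat_Suc)
  finally show ?case
    by (simp del: of_nat_Suc)
qed

lemma falling_ratio_le:
  fixes N K :: real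
  assumes "8 \<le> K" "2 * K + 1 \<le> N"
  shows "(N - K) * (N - K - 1) \<le> (16/15 * (1 - 7/8 * (K / (N - 1))))^2 * ((N - 2) * (N - 3))"
proof -
  define c where "c = 16/15 * (1 - 7/8 * (K / (N - 1)))"
  define p where "p = (N - K) / (N - 2)"
  define t where "t = (N - K - 1) / (N - 3)"
  have pos: "N - 3 > 0" "N - 2 > 0" "N - 1 > 0"
    using assms by auto
  have "0 \<le> t"
    unfolding t_def using assms by simp
  have "t \<le> p"
    unfolding t_def p_def using assms by (simp add: divide_simps algebra_simps)
  \<comment> \<open>\<open>p = (1 - u + \<epsilon>)/(1 - \<epsilon>)\<close> for \<open>u = K/(N - 1)\<close>, \<open>\<epsilon> = 1/(N - 1)\<close>, and \<open>\<epsilon> \<le> 1/16\<close>, \<open>\<epsilon> \<le> u/8\<close>\<close>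
  have "(N - K) * (15 * (N - 1)) \<le> 2 * (8 * N - 8 - 7 * K) * (N - 2)"
    using mult_nonneg_nonneg[of "N - 17" "N - 8"] mult_nonneg_nonneg[of "K - 8" "N + 13"] assms
    by (simp add: algebra_simps)
  then have "p \<le> 2 * (8 * N - 8 - 7 * K) / (15 * (N - 1))"
    unfolding p_def using pos by (simp add: divide_simps mult.commute)
  also have "\<dots> = c"
    unfolding c_def using pos by (simp add: field_simps)
  finally have "p * t \<le> c^2"
    using \<open>0 \<le> t\<close> \<open>t \<le> p\<close> by (metis mult_mono order.trans power2_eq_square)
  then show ?thesis
    unfolding p_def t_def c_def[symmetric] using pos by (simp add: divide_le_eq)
qed

lemma binomial_pred_ratio:
  fixes n k :: nat
  assumes "2 \<le> k" "1 \<le> n"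
  shows "(real n - 1) * real ((n - 2) choose (k - 2)) = (real k - 1) * real ((n - 1) choose (k - 1))"
proof -
  have "(n - 1) * ((n - 2) choose (k - 2)) = (k - 1) * ((n - 1) choose (k - 1))"
    using times_binomial_minus1_eq[of "k - 1" "n - 1"] assms by (simp add: numeral_2_eq_2 mult.commute)
  from arg_cong[OF this, of real] show ?thesis
    using assms by (simp add: of_nat_diff)
qed

lemma binomial_shift2_ratio:
  fixes n k :: nat
  assumes "2 \<le> k" "k + 1 \<le> n"
  shows "(real n - 2) * (real n - 3) * real ((n - 4) choose (k - 2))
       = (real n - real k) * (real n - real k - 1) * real ((n - 2) choose (k - 2))"
proof -
  have "n - 2 - (k - 2) = n - k" "n - 2 - 1 - (k - 2) = n - k - 1" "n - 2 - 1 = n - 3" "n - 2 - 2 = n - 4"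
    using assms by auto
  then have "(n - 2) * (n - 3) * ((n - 4) choose (k - 2)) = (n - k) * (n - k - 1) * ((n - 2) choose (k - 2))"
    using binomial_absorb_comp2[of "n - 2" "k - 2"] by simp
  from arg_cong[OF this, of real] show ?thesis
    using assms by (simp add: of_nat_diff)
qed

definition pair_ratio_bound :: "real \<Rightarrow> real" where
  "pair_ratio_bound u = u * (1 + (16/15 * (1 - 7/8 * u))^2)"

lemma binomial_pair_le:
  fixes n k :: nat
  assumes "8 \<le> k" "2 * k + 1 \<le> n"
  shows "real ((n - 2) choose (k - 2)) + real ((n - 4) choose (k - 2))
         \<le> real ((n - 1) choose (k - 1)) * pair_ratio_bound (real k / (real n - 1))"
proof -
  define u where "u = real k / (real n - 1)"
  define c where "c = 16/15 * (1 - 7/8 * u)"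
  define B where "B = real ((n - 1) choose (k - 1))"
  define C1 where "C1 = real ((n - 2) choose (k - 2))"
  define C2 where "C2 = real ((n - 4) choose (k - 2))"
  have n_pos: "real n - 1 > 0" "(real n - 2) * (real n - 3) > 0"
    using assms by auto
  have C2_eq: "(real n - 2) * (real n - 3) * C2 = (real n - real k) * (real n - real k - 1) * C1"
    unfolding C1_def C2_def using assms by (intro binomial_shift2_ratio) auto
  have "(real n - real k) * (real n - real k - 1) \<le> c^2 * ((real n - 2) * (real n - 3))"
    unfolding c_def u_def using falling_ratio_le[of "real k" "real n"] assms by simp
  from mult_right_mono[OF this, of C1]
  have "(real n - 2) * (real n - 3) * C2 \<le> (real n - 2) * (real n - 3) * (c^2 * C1)"
    unfolding C2_eq C1_def by (simp add: mult_ac)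
  then have C2_le: "C2 \<le> c^2 * C1"
    using n_pos(2) by (rule mult_left_le_imp_le)
  have C1_le: "C1 \<le> u * B"
    using binomial_pred_ratio[of k n] assms n_pos unfolding u_def B_def C1_def by (simp add: field_simps)
  have "C1 + C2 \<le> C1 * (1 + c^2)"
    using C2_le by (simp add: algebra_simps)
  also have "\<dots> \<le> u * B * (1 + c^2)"
    using C1_le by (simp add: mult_right_mono)
  finally show ?thesis
    unfolding pair_ratio_bound_def B_def C1_def C2_def c_def u_def by (simp add: mult_ac)
qed

lemma binomial_minus_k_le:
  fixes n k :: nat
  assumes "8 \<le> k" "2 * k + 1 \<le> n"
  shows "real ((n - k - 1) choose (k - 1)) \<le> real ((n - 1) choose (k - 1)) * (1 - real k / (real n - 1))^7"
proof -
  define q where "q = 1 - real k / (real n - 1)"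
  have n_pos: "real (n - 1) > 0"
    using assms by simp
  have q_eq: "q = real (n - k - 1) / real (n - 1)"
    unfolding q_def using assms by (simp add: of_nat_diff field_simps)
  have q_bounds: "0 \<le> q" "q \<le> 1"
    unfolding q_eq using assms by (auto simp: divide_simps)
  have "real ((n - k - 1) choose (k - 1)) * real (n - 1) ^ (k - 1)
      \<le> real ((n - 1) choose (k - 1)) * real (n - k - 1) ^ (k - 1)"
    by (rule binomial_mult_power_le) simp
  then have "real ((n - k - 1) choose (k - 1)) \<le> real ((n - 1) choose (k - 1)) * q ^ (k - 1)"
    unfolding q_eq using n_pos by (simp add: power_divide le_divide_eq)
  also have "\<dots> \<le> real ((n - 1) choose (k - 1)) * q ^ 7"
    using assms q_bounds by (intro mult_left_mono power_decreasing) auto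
  finally show ?thesis
    unfolding q_def .
qed

lemma pair_ratio_gap_on_interval:
  fixes u u0 u1 :: real
  assumes "0 \<le> u0" "u0 \<le> u" "u \<le> u1" "u1 \<le> 1"
    and "u1 * (1 + (16/15 * (1 - 7/8 * u0))^2) < 1"
    and "2 * (1 - u0)^7 < (1 - u1 * (1 + (16/15 * (1 - 7/8 * u0))^2))^2"
  shows "pair_ratio_bound u < 1 \<and> 2 * (1 - u)^7 < (1 - pair_ratio_bound u)^2"
proof -
  define b where "b = u1 * (1 + (16/15 * (1 - 7/8 * u0))^2)"
  have "(16/15 * (1 - 7/8 * u))^2 \<le> (16/15 * (1 - 7/8 * u0))^2"
    using assms by (intro power_mono) auto
  then have "pair_ratio_bound u \<le> b"
    unfolding pair_ratio_bound_def b_def using assms by (intro mult_mono) auto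
  moreover have "0 \<le> pair_ratio_bound u"
    unfolding pair_ratio_bound_def using assms by simp
  moreover have "b < 1" "2 * (1 - u0)^7 < (1 - b)^2"
    using assms unfolding b_def by auto
  moreover have "(1 - b)^2 \<le> (1 - pair_ratio_bound u)^2"
    using calculation by (intro power_mono) auto
  moreover have "(1 - u)^7 \<le> (1 - u0)^7"
    using assms by (intro power_mono) auto
  ultimately show ?thesis
    by linarith
qed

lemma pair_ratio_gap:
  fixes u :: real
  assumes "1/4 \<le> u" "u \<le> 1/2"
  shows "pair_ratio_bound u < 1 \<and> 2 * (1 - u)^7 < (1 - pair_ratio_bound u)^2"
proof -
  consider "u \<le> 11/40" | "11/40 \<le> u" "u \<le> 13/40" | "13/40 \<le> u" "u \<le> 2/5" | "2/5 \<le> u"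
    by linarith
  then show ?thesis
  proof cases
    case 1
    then show ?thesis
      using assms by (intro pair_ratio_gap_on_interval[of "1/4" u "11/40"]) (auto simp: power2_eq_square power_divide)
  next
    case 2
    then show ?thesis
      by (intro pair_ratio_gap_on_interval[of "11/40" u "13/40"]) (auto simp: power2_eq_square power_divide)
  next
    case 3
    then show ?thesis
      by (intro pair_ratio_gap_on_interval[of "13/40" u "2/5"]) (auto simp: power2_eq_square power_divide)
  next
    case 4
    then show ?thesis
      using assms by (intro pair_ratio_gap_on_interval[of "2/5" u "1/2"]) (auto simp: power2_eq_square power_divide)
  qed
qed

lemma add_square_div_gt_of_gap:
  fixes A B D h :: real
  assumes "0 < A" "0 \<le> D" "D \<le> B" "B - D \<le> h" "2 * B * D < (B - A)^2"
  shows "2 * B < A + h^2 / A"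
proof -
  have "B^2 - 2 * B * D \<le> (B - D)^2"
    using assms by (simp add: power2_eq_square algebra_simps)
  also have "\<dots> \<le> h^2"
    using assms by (intro power_mono) auto
  finally have "2 * B * A < A^2 + h^2"
    using assms(5) by (simp add: power2_eq_square algebra_simps)
  then show ?thesis
    using assms(1) by (simp add: field_simps power2_eq_square)
qed

lemma square_gap_of_ratio_bounds:
  fixes A B D y z :: real
  assumes "0 < B" "A \<le> B * y" "y < 1" "D \<le> B * z" "2 * z < (1 - y)^2"
  shows "2 * B * D < (B - A)^2"
proof -
  have "2 * B * D \<le> B^2 * (2 * z)"
    using assms by (simp add: power2_eq_square)
  also have "\<dots> < B^2 * (1 - y)^2"
    using assms by simp
  also have "\<dots> = (B - B * y)^2"
    by (simp add: power2_eq_square algebra_simps)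
  also have "\<dots> \<le> (B - A)^2"
    using assms by (intro power_mono) (auto simp: mult_less_cancel_left1)
  finally show ?thesis .
qed

theorem lemma2p9:
  fixes n k :: nat
  assumes "k \<ge> 8" and "2 * k + 1 \<le> n" and "n \<le> 4 * k"
  shows "real ((n - 2) choose (k - 2)) + real ((n - 4) choose (k - 2))
         + (h n k)^2 / (real ((n - 2) choose (k - 2)) + real ((n - 4) choose (k - 2)))
         > 2 * real ((n - 1) choose (k - 1))"
proof -
  define u where "u = real k / (real n - 1)"
  define A where "A = real ((n - 2) choose (k - 2)) + real ((n - 4) choose (k - 2))"
  define B where "B = real ((n - 1) choose (k - 1))"
  define D where "D = real ((n - k - 1) choose (k - 1))"
  have u_bounds: "1/4 \<le> u" "u \<le> 1/2"
    unfolding u_def using assms by (auto simp: divide_simps)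
  have A_le: "A \<le> B * pair_ratio_bound u"
    unfolding A_def B_def u_def using assms(1,2) by (rule binomial_pair_le)
  have D_le: "D \<le> B * (1 - u)^7"
    unfolding D_def B_def u_def using assms(1,2) by (rule binomial_minus_k_le)
  have "0 < A" "0 < B" "0 \<le> D"
    unfolding A_def B_def D_def using assms by (auto intro!: add_pos_nonneg)
  moreover have "D \<le> B"
  proof -
    have "(1 - u)^7 \<le> 1"
      using u_bounds by (simp add: power_le_one)
    with D_le \<open>0 < B\<close> show ?thesis
      by (smt (verit) mult_left_le)
  qed
  moreover have "2 * B * D < (B - A)^2"
    using pair_ratio_gap[OF u_bounds] by (intro square_gap_of_ratio_bounds[OF \<open>0 < B\<close> A_le _ D_le]) auto
  moreover have "h n k = B - D + 1"
    unfolding h_def B_def D_def ..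
  ultimately show ?thesis
    using add_square_div_gt_of_gap[of A D B "h n k"] unfolding A_def B_def by simp
qed

end
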